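(* Let $M=\frac32-\sqrt2$. For real $f_1,f_2,y_1,y_2$ put $$\hat A=(1-f_1)(1-y_1)+3(1-f_2)(1-y_2),\quad \hat F_1=\frac{(1-f_1)(1-y_1)}{\hat A},\quad \hat F_2=\frac{(1-f_2)(1-y_2)}{\hat A},$$ and $$\hat\alpha(f_1,f_2,y_1,y_2)=\frac{1}{\frac12-\hat F_1}\left(\frac{(1-\hat F_1)\,y_1(\frac12-y_1)}{1-y_1}+\frac{3\hat F_2\,y_2(\frac12-y_2)}{1-y_2}+12Mf_1\cdot\frac{\hat F_2}{1-f_2}\right).$$ Then for all $f_1,f_2,y_1,y_2\in[0,\frac12]$ such that $\frac1{13}\le f_1\le\frac12$ and $f_1+3f_2=1$, we have $\hat\alpha(f_1,f_2,y_1,y_2)\le\frac{963}{1000}$.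
   Context: In the paper's notation, with $\Phi(x)=\frac{1}{x(\frac12-x)}$, the factor $\frac1{\frac12-\hat F_1}$ is $\Phi(\hat F_1)\hat F_1$ and $y(\frac12-y)=1/\Phi(y)$. Under the hypotheses $0<\hat F_1<\frac12$, so $\hat\alpha$ is well defined. *)

theory Defs
  imports Complex_Main
begin

definition M_const :: real where
  "M_const = 3/2 - sqrt 2"

definition A_hat :: "real \<Rightarrow> real \<Rightarrow> real \<Rightarrow> real \<Rightarrow> real" where
  "A_hat f1 f2 y1 y2 = (1 - f1) * (1 - y1) + 3 * (1 - f2) * (1 - y2)"

definition F1_hat :: "real \<Rightarrow> real \<Rightarrow> real \<Rightarrow> real \<Rightarrow> real" where
  "F1_hat f1 f2 y1 y2 = (1 - f1) * (1 - y1) / A_hat f1 f2 y1 y2"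

definition F2_hat :: "real \<Rightarrow> real \<Rightarrow> real \<Rightarrow> real \<Rightarrow> real" where
  "F2_hat f1 f2 y1 y2 = (1 - f2) * (1 - y2) / A_hat f1 f2 y1 y2"

definition alpha_hat :: "real \<Rightarrow> real \<Rightarrow> real \<Rightarrow> real \<Rightarrow> real" where
  "alpha_hat f1 f2 y1 y2 =
     (let F1 = F1_hat f1 f2 y1 y2; F2 = F2_hat f1 f2 y1 y2 in
      (1 / (1/2 - F1)) *
        ((1 - F1) * y1 * (1/2 - y1) / (1 - y1)
         + 3 * F2 * y2 * (1/2 - y2) / (1 - y2)
         + 12 * M_const * f1 * (F2 / (1 - f2))))"

end

theory Submission imports Defs begin

text \<open>With \<open>u = 1 - y1\<close>, \<open>v = 1 - y2\<close> and \<open>f2 = (1 - f1)/3\<close>, clearing the denominators of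
  \<open>963/1000 - alpha_hat\<close> leaves a polynomial that is affine in \<open>f1\<close> and in \<open>M\<close>, with a
  nonpositive \<open>M\<close>-coefficient. So it suffices to replace \<open>M\<close> by a rational upper bound and
  to check the two endpoints \<open>f1 = 1/13\<close> and \<open>f1 = 1/2\<close>. At each endpoint the polynomial is
  a quadratic in \<open>u\<close> with positive leading coefficient, whose discriminant (a quartic in
  \<open>v\<close>) is shown to have the right sign on \<open>[1/2, 1]\<close> by an explicit certificate.\<close>

lemma quadratic_nonneg:
  fixes a b c x :: real
  assumes "a > 0" "b\<^sup>2 \<le> 4 * a * c"
  shows "a * x\<^sup>2 + b * x + c \<ge> 0"
proof -
  have "4 * a * (a * x\<^sup>2 + b * x + c) = (2 * a * x + b)\<^sup>2 + (4 * a * c - b\<^sup>2)"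
    by (simp add: algebra_simps power2_eq_square)
  then have "4 * a * (a * x\<^sup>2 + b * x + c) \<ge> 0"
    using assms by simp
  then show ?thesis
    using assms by (simp add: zero_le_mult_iff)
qed

lemma concave_quadratic_ge_endpoints:
  fixes a b c l r x m :: real
  assumes "l \<le> x" "x \<le> r" "c \<le> 0"
    and "a + b * l + c * l\<^sup>2 \<ge> m" "a + b * r + c * r\<^sup>2 \<ge> m"
  shows "a + b * x + c * x\<^sup>2 \<ge> m"
proof (cases "l = r")
  case True
  then show ?thesis using assms by simp
next
  case False
  then have "r - l > 0" using assms by simp
  have interp: "(r - l) * (a + b * x + c * x\<^sup>2)
      = (r - x) * (a + b * l + c * l\<^sup>2) + (x - l) * (a + b * r + c * r\<^sup>2)
        + (r - l) * (c * ((x - l) * (x - r)))"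
    by (simp add: algebra_simps power2_eq_square)
  have "c * ((x - l) * (x - r)) \<ge> 0"
    using assms by (simp add: mult_nonpos_nonpos mult_nonneg_nonpos)
  then have "(r - l) * (c * ((x - l) * (x - r))) \<ge> 0"
    using \<open>r - l > 0\<close> by simp
  moreover have "(r - x) * (a + b * l + c * l\<^sup>2) \<ge> (r - x) * m"
    using assms by (intro mult_left_mono) auto
  moreover have "(x - l) * (a + b * r + c * r\<^sup>2) \<ge> (x - l) * m"
    using assms by (intro mult_left_mono) auto
  ultimately have "(r - l) * (a + b * x + c * x\<^sup>2) \<ge> (r - l) * m"
    using \<open>r - l > 0\<close> unfolding interp by (simp add: algebra_simps)
  then show ?thesis using \<open>r - l > 0\<close> by simp
qed

lemma quartic_nonneg_on_interval:
  fixes a0 a1 a2 a3 a4 l r m h :: real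
  assumes "l \<le> h" "h \<le> r" "a4 \<le> 0" "m > 0"
    and "a2 + a3 * l + a4 * l\<^sup>2 \<ge> m" "a2 + a3 * r + a4 * r\<^sup>2 \<ge> m"
    and "a1\<^sup>2 \<le> 4 * m * a0"
  shows "a0 + a1 * h + h\<^sup>2 * (a2 + a3 * h + a4 * h\<^sup>2) \<ge> 0"
proof -
  have "a2 + a3 * h + a4 * h\<^sup>2 \<ge> m"
    using assms by (intro concave_quadratic_ge_endpoints[of l h r]) auto
  then have "h\<^sup>2 * (a2 + a3 * h + a4 * h\<^sup>2) \<ge> h\<^sup>2 * m"
    by (intro mult_left_mono) auto
  moreover have "m * h\<^sup>2 + a1 * h + a0 \<ge> 0"
    using assms by (intro quadratic_nonneg) auto
  ultimately show ?thesis by (simp add: algebra_simps)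
qed

definition alpha_slack :: "real \<Rightarrow> real \<Rightarrow> real \<Rightarrow> real \<Rightarrow> real" where
  "alpha_slack M f u v =
     963/1000 * ((2 + f) * v - (1 - f) * u) * u
     - 2 * ((2 + f) * v * ((1 - u) * (u - 1/2)) + (2 + f) * u * ((1 - v) * (v - 1/2))
            + 12 * M * f * u * v)"

lemma alpha_hat_eq_slack:
  fixes f1 f2 y1 y2 :: real
  assumes "f1 + 3 * f2 = 1" "f1 \<le> 1" "y1 < 1" "y2 < 1"
    and "(1 - f1) * (1 - y1) < (2 + f1) * (1 - y2)"
  shows "alpha_hat f1 f2 y1 y2 = 963/1000 - alpha_slack M_const f1 (1 - y1) (1 - y2)
                                   / (((2 + f1) * (1 - y2) - (1 - f1) * (1 - y1)) * (1 - y1))"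
proof -
  define u where "u = 1 - y1"
  define v where "v = 1 - y2"
  define D where "D = (2 + f1) * v - (1 - f1) * u"
  define A where "A = (1 - f1) * u + (2 + f1) * v"
  have u: "u > 0" and v: "v > 0" and D: "D > 0"
    using assms by (auto simp: u_def v_def D_def)
  have "(1 - f1) * u \<ge> 0"
    using assms u by simp
  then have A: "A > 0" and "(2 + f1) * v > 0"
    using D by (auto simp: A_def D_def u_def v_def)
  then have f1: "2 + f1 > 0"
    using v by (simp add: zero_less_mult_iff)
  have f2: "1 - f2 = (2 + f1) / 3"
    using assms by simp
  have "A_hat f1 f2 y1 y2 = A"
    unfolding A_hat_def A_def u_def v_def mult.assoc[of 3] f2 by simp
  then have F1: "F1_hat f1 f2 y1 y2 = (1 - f1) * u / A"
    and F2: "F2_hat f1 f2 y1 y2 = (2 + f1) * v / (3 * A)"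
    unfolding F1_hat_def F2_hat_def f2 by (simp_all add: u_def v_def)
  have "1/2 - (1 - f1) * u / A = D / (2 * A)"
    using A by (simp add: A_def D_def u_def v_def field_simps)
  moreover have "1 - (1 - f1) * u / A = (2 + f1) * v / A"
    using A by (simp add: A_def field_simps)
  moreover have "(2 + f1) * v / (3 * A) / (1 - f2) = v / A"
    using A f1 unfolding f2 by (simp add: divide_simps)
  ultimately have "alpha_hat f1 f2 y1 y2
      = (2 * A / D) * ((2 + f1) * v / A * y1 * (1/2 - y1) / u
          + 3 * ((2 + f1) * v / (3 * A)) * y2 * (1/2 - y2) / v
          + 12 * M_const * f1 * (v / A))"
    unfolding alpha_hat_def Let_def F1 F2 by (simp add: u_def v_def)
  also have "\<dots> = 2 * ((2 + f1) * v * (y1 * (1/2 - y1)) + (2 + f1) * u * (y2 * (1/2 - y2))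
                         + 12 * M_const * f1 * u * v) / (D * u)"
    using A D u v by (simp add: field_simps)
  also have "\<dots> = (963/1000 * (D * u) - alpha_slack M_const f1 u v) / (D * u)"
    unfolding alpha_slack_def D_def u_def v_def
    by (rule arg_cong[where f="\<lambda>x. x / _"]) (simp add: field_simps)
  also have "\<dots> = 963/1000 - alpha_slack M_const f1 u v / (D * u)"
    using D u by (simp add: diff_divide_distrib)
  finally show ?thesis by (simp add: u_def v_def D_def)
qed

definition M_upper :: real where
  "M_upper = 3/2 - 14142135/10^7"

lemma M_const_le_M_upper: "M_const \<le> M_upper"
proof -
  have "14142135/10^7 \<le> sqrt (2::real)"
    by (rule real_le_rsqrt) (simp add: power2_eq_square)
  then show ?thesis unfolding M_const_def M_upper_def by simp
qed

lemma alpha_slack_antimono: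
  assumes "M \<le> M'" "f \<ge> 0" "u \<ge> 0" "v \<ge> 0"
  shows "alpha_slack M' f u v \<le> alpha_slack M f u v"
proof -
  have "M * (f * u * v) \<le> M' * (f * u * v)"
    using assms by (intro mult_right_mono) auto
  then show ?thesis unfolding alpha_slack_def by (simp add: algebra_simps)
qed

lemma alpha_slack_nonneg_at_half:
  assumes "1/2 \<le> u" "u \<le> 1" "1/2 \<le> v" "v \<le> 1"
  shows "alpha_slack M_upper (1/2) u v \<ge> 0"
proof -
  define p where "p = 5 * v - 963/2000"
  define R where "R = -5/2 + 6810969/500000 * v - 5 * v\<^sup>2"
  define q where "q = 5/2 * v"
  define h where "h = v - 13/20"
  have slack: "alpha_slack M_upper (1/2) u v = p * u\<^sup>2 + (- R) * u + q"
    unfolding alpha_slack_def p_def q_def R_def M_upper_def by (simp add: field_simps power2_eq_square)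
  have discr: "4 * p * q - R\<^sup>2 = 272464745591/100000000000000 + (-585247971493/2500000000000) * h
     + h\<^sup>2 * (10423899031039/250000000000 + 3560969/50000 * h + (-25) * h\<^sup>2)"
    unfolding p_def q_def R_def h_def
    by (simp add: field_simps power2_eq_square power3_eq_cube power4_eq_xxxx)
  have "4 * p * q - R\<^sup>2 \<ge> 0" unfolding discr
    by (rule quartic_nonneg_on_interval[where l="-3/20" and r="7/20" and m=30])
      (use assms in \<open>auto simp: h_def power2_eq_square\<close>)
  moreover have "p > 0" using assms p_def by simp
  ultimately show ?thesis unfolding slack by (intro quadratic_nonneg) simp_all
qed

lemma alpha_slack_nonneg_at_one_thirteenth:
  assumes "1/2 \<le> u" "u \<le> 1" "1/2 \<le> v" "v \<le> 1"
  shows "alpha_slack M_upper (1/13) u v \<ge> 0"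
proof -
  define p where "p = 54/13 * v - 2889/3250"
  define R where "R = -27/13 + 34514469/3250000 * v - 54/13 * v\<^sup>2"
  define q where "q = 27/13 * v"
  define h where "h = v - 11/20"
  have slack: "alpha_slack M_upper (1/13) u v = p * u\<^sup>2 + (- R) * u + q"
    unfolding alpha_slack_def p_def q_def R_def M_upper_def by (simp add: field_simps power2_eq_square)
  have discr: "4 * p * q - R\<^sup>2 = 380003915062719/4225000000000000 + (24473057853429/105625000000000) * h
     + h\<^sup>2 * (197837273598039/10562500000000 + 530940663/10562500 * h + (-2916/169) * h\<^sup>2)"
    unfolding p_def q_def R_def h_def
    by (simp add: field_simps power2_eq_square power3_eq_cube power4_eq_xxxx)
  have "4 * p * q - R\<^sup>2 \<ge> 0" unfolding discr
    by (rule quartic_nonneg_on_interval[where l="-1/20" and r="9/20" and m=15])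
      (use assms in \<open>auto simp: h_def power2_eq_square\<close>)
  moreover have "p > 0" using assms p_def by simp
  ultimately show ?thesis unfolding slack by (intro quadratic_nonneg) simp_all
qed

lemma alpha_slack_nonneg:
  assumes "1/2 \<le> u" "u \<le> 1" "1/2 \<le> v" "v \<le> 1" "1/13 \<le> f" "f \<le> 1/2"
  shows "alpha_slack M_const f u v \<ge> 0"
proof -
  have affine: "alpha_slack M_upper f u v
      = 26/11 * ((1/2 - f) * alpha_slack M_upper (1/13) u v + (f - 1/13) * alpha_slack M_upper (1/2) u v)"
    unfolding alpha_slack_def by (simp add: field_simps power2_eq_square)
  have "(1/2 - f) * alpha_slack M_upper (1/13) u v \<ge> 0"
    using alpha_slack_nonneg_at_one_thirteenth[OF assms(1-4)] assms by simp
  moreover have "(f - 1/13) * alpha_slack M_upper (1/2) u v \<ge> 0"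
    using alpha_slack_nonneg_at_half[OF assms(1-4)] assms by simp
  ultimately have "alpha_slack M_upper f u v \<ge> 0"
    unfolding affine by simp
  also have "alpha_slack M_upper f u v \<le> alpha_slack M_const f u v"
    using M_const_le_M_upper assms by (intro alpha_slack_antimono) auto
  finally show ?thesis .
qed

theorem lemma20:
  fixes f1 f2 y1 y2 :: real
  assumes "f1 \<in> {0..1/2}" and "f2 \<in> {0..1/2}" and "y1 \<in> {0..1/2}" and "y2 \<in> {0..1/2}"
    and "1/13 \<le> f1" and "f1 \<le> 1/2"
    and "f1 + 3 * f2 = 1"
  shows "alpha_hat f1 f2 y1 y2 \<le> 963/1000"
proof -
  define D where "D = (2 + f1) * (1 - y2) - (1 - f1) * (1 - y1)"
  have "(2 + f1) / 2 \<le> (2 + f1) * (1 - y2)" and "(1 - f1) * (1 - y1) \<le> 1 - f1"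
    using mult_left_mono[of "1/2" "1 - y2" "2 + f1"] mult_left_mono[of "1 - y1" 1 "1 - f1"] assms
    by auto
  then have "D > 0"
    using \<open>1/13 \<le> f1\<close> unfolding D_def by argo
  moreover have "1 - y1 > 0" and "alpha_slack M_const f1 (1 - y1) (1 - y2) \<ge> 0"
    using assms by (auto intro: alpha_slack_nonneg)
  moreover have "alpha_hat f1 f2 y1 y2
      = 963/1000 - alpha_slack M_const f1 (1 - y1) (1 - y2) / (D * (1 - y1))"
    using assms \<open>D > 0\<close> unfolding D_def by (intro alpha_hat_eq_slack) auto
  ultimately show ?thesis by simp
qed

end
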